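(* Let $\Gamma$ be a finite group, $\theta:\Gamma\to O(\mathbb{R}^d)$ a point group, and let $(G,p)$ be a bar-joint framework with $V(G)=\Gamma\times\hat V$ that is $\theta$-symmetric, with quotient $\Gamma$-gain graph $G/\Gamma$ (so $G$ is the lift of $G/\Gamma$), and with $p\in\mathcal{C}_\theta(V)$. If $(G,p)$ is universally rigid, then the problem (P$^\Gamma$): find $X\in(\mathcal{L}^V)^\Gamma_+$ with $\langle X,F_{(u,v,\gamma)}\rangle=\langle P^\top P,F_{(u,v,\gamma)}\rangle$ for all $(u,v,\gamma)\in E(G/\Gamma)$, has the unique solution $P^\top P$.
   Context: A bar-joint framework $(G,p)$ is a tensegrity with all edges bars: $G=(V,E)$ finite simple graph, $p:V\to\mathbb{R}^d$; it is universally rigid if for every $d'\geq d$ every $q:V\to\mathbb{R}^{d'}$ with $\|q_i-q_j\|=\|p_i-p_j\|$ for all $ij\in E$ satisfies $\|q_i-q_j\|=\|p_i-p_j\|$ for all $i,j\in V$. A $\Gamma$-gain graph on $\hat V$ is a set of triples $(u,v,\gamma)\in\hat V\times\hat V\times\Gamma$ up to $(u,v,\gamma)\sim(v,u,\gamma^{-1})$; its lift is the graph on $\Gamma\times\hat V$ with $\{(\alpha,u),(\beta,v)\}$ an edge iff $(u,v,\alpha^{-1}\beta)$ is in the gain graph. $p$ is compatible with $\theta$ if $\theta(\gamma)p_{(\alpha,v)}=p_{(\gamma\alpha,v)}$ for all $\gamma,\alpha,v$; $\mathcal{C}_\theta(V)$ is the set of compatible configurations with $\sum_{i\in V}p_i=\mathbf{0}$.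 $(G,p)$ is $\theta$-symmetric if $G$ is the lift of a $\Gamma$-gain graph and $p$ is compatible with $\theta$. $P$ is the $d\times|V|$ matrix with columns $p_i$, $P^\top P$ its Gram matrix. $F_{ij}=(\mathbf{e}_i-\mathbf{e}_j)(\mathbf{e}_i-\mathbf{e}_j)^\top$ and $F_{(u,v,\gamma)}=\sum_{\alpha\in\Gamma}F_{(\alpha,u)(\alpha\gamma,v)}$. $(\mathcal{L}^V)^\Gamma_+$ is the set of positive semidefinite symmetric $V\times V$ matrices $L$ with $L\mathbf{1}_V=\mathbf{0}$ and $L[(\alpha,u),(\beta,v)]=L[(\gamma\alpha,u),(\gamma\beta,v)]$ for all $\alpha,\beta,\gamma\in\Gamma$, $u,v\in\hat V$. $\langle A,B\rangle=\operatorname{tr}(AB)$. *)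

theory Defs
  imports "HOL-Analysis.Analysis" "HOL-Algebra.Group"
begin

text \<open>Matrices indexed by vertices are functions 'i => 'i => real; only entries on V x V matter.\<close>

definition point_group :: "('g,'b) monoid_scheme \<Rightarrow> ('g \<Rightarrow> real^'d^'d) \<Rightarrow> bool" where
  "point_group Gm \<theta> \<longleftrightarrow>
     (\<forall>g\<in>carrier Gm. orthogonal_matrix (\<theta> g)) \<and>
     (\<forall>g\<in>carrier Gm. \<forall>h\<in>carrier Gm. \<theta> (g \<otimes>\<^bsub>Gm\<^esub> h) = \<theta> g ** \<theta> h)"

text \<open>Gain graph: a set of triples (u,v,gamma), read up to (u,v,gamma) ~ (v,u,gamma^-1).
  Adjacency in its lift on Gamma x Vhat.\<close>
definition lift_adj :: "('g,'b) monoid_scheme \<Rightarrow> ('v \<times> 'v \<times> 'g) set \<Rightarrow> 'g \<times> 'v \<Rightarrow> 'g \<times> 'v \<Rightarrow> bool" where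
  "lift_adj Gm Eh x y \<longleftrightarrow> fst x \<in> carrier Gm \<and> fst y \<in> carrier Gm \<and>
     ((snd x, snd y, inv\<^bsub>Gm\<^esub> (fst x) \<otimes>\<^bsub>Gm\<^esub> fst y) \<in> Eh \<or>
      (snd y, snd x, inv\<^bsub>Gm\<^esub> (fst y) \<otimes>\<^bsub>Gm\<^esub> fst x) \<in> Eh)"

definition edist :: "nat \<Rightarrow> (nat \<Rightarrow> real) \<Rightarrow> (nat \<Rightarrow> real) \<Rightarrow> real" where
  "edist d' x y = sqrt (\<Sum>k<d'. (x k - y k)^2)"

definition universally_rigid :: "'i set \<Rightarrow> ('i \<Rightarrow> 'i \<Rightarrow> bool) \<Rightarrow> ('i \<Rightarrow> real^'d) \<Rightarrow> bool" where
  "universally_rigid V adj p \<longleftrightarrow>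
     (\<forall>d'::nat. d' \<ge> CARD('d) \<longrightarrow>
       (\<forall>q :: 'i \<Rightarrow> nat \<Rightarrow> real. (\<forall>i k. d' \<le> k \<longrightarrow> q i k = 0) \<longrightarrow>
          (\<forall>i\<in>V. \<forall>j\<in>V. adj i j \<longrightarrow> edist d' (q i) (q j) = norm (p i - p j)) \<longrightarrow>
          (\<forall>i\<in>V. \<forall>j\<in>V. edist d' (q i) (q j) = norm (p i - p j))))"

definition compatible :: "('g,'b) monoid_scheme \<Rightarrow> 'v set \<Rightarrow> ('g \<Rightarrow> real^'d^'d) \<Rightarrow> ('g \<times> 'v \<Rightarrow> real^'d) \<Rightarrow> bool" where
  "compatible Gm Vh \<theta> p \<longleftrightarrow>
     (\<forall>\<gamma>\<in>carrier Gm. \<forall>\<alpha>\<in>carrier Gm. \<forall>v\<in>Vh. \<theta> \<gamma> *v p (\<alpha>, v) = p (\<gamma> \<otimes>\<^bsub>Gm\<^esub> \<alpha>, v))"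

definition C_theta :: "('g,'b) monoid_scheme \<Rightarrow> 'v set \<Rightarrow> ('g \<Rightarrow> real^'d^'d) \<Rightarrow> ('g \<times> 'v \<Rightarrow> real^'d) set" where
  "C_theta Gm Vh \<theta> = {p. compatible Gm Vh \<theta> p \<and> (\<Sum>i\<in>carrier Gm \<times> Vh. p i) = 0}"

definition gram :: "('i \<Rightarrow> real^'d) \<Rightarrow> 'i \<Rightarrow> 'i \<Rightarrow> real" where
  "gram p i j = p i \<bullet> p j"

definition Fmat :: "'i \<Rightarrow> 'i \<Rightarrow> 'i \<Rightarrow> 'i \<Rightarrow> real" where
  "Fmat a b = (\<lambda>i j. ((if i = a then 1 else 0) - (if i = b then 1 else 0)) *
                      ((if j = a then 1 else 0) - (if j = b then 1 else 0)))"

definition Fgain :: "('g,'b) monoid_scheme \<Rightarrow> 'v \<Rightarrow> 'v \<Rightarrow> 'g \<Rightarrow> 'g \<times> 'v \<Rightarrow> 'g \<times> 'v \<Rightarrow> real" where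
  "Fgain Gm u v \<gamma> = (\<lambda>i j. \<Sum>\<alpha>\<in>carrier Gm. Fmat (\<alpha>, u) (\<alpha> \<otimes>\<^bsub>Gm\<^esub> \<gamma>, v) i j)"

definition frob :: "'i set \<Rightarrow> ('i \<Rightarrow> 'i \<Rightarrow> real) \<Rightarrow> ('i \<Rightarrow> 'i \<Rightarrow> real) \<Rightarrow> real" where
  "frob V A B = (\<Sum>i\<in>V. \<Sum>j\<in>V. A i j * B j i)"

definition inv_psd_laplacians :: "('g,'b) monoid_scheme \<Rightarrow> 'v set \<Rightarrow> ('g \<times> 'v \<Rightarrow> 'g \<times> 'v \<Rightarrow> real) set" where
  "inv_psd_laplacians Gm Vh = {L.
     (\<forall>i\<in>carrier Gm \<times> Vh. \<forall>j\<in>carrier Gm \<times> Vh. L i j = L j i) \<and>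
     (\<forall>x. 0 \<le> (\<Sum>i\<in>carrier Gm \<times> Vh. \<Sum>j\<in>carrier Gm \<times> Vh. x i * L i j * x j)) \<and>
     (\<forall>i\<in>carrier Gm \<times> Vh. (\<Sum>j\<in>carrier Gm \<times> Vh. L i j) = 0) \<and>
     (\<forall>\<alpha>\<in>carrier Gm. \<forall>\<beta>\<in>carrier Gm. \<forall>\<gamma>\<in>carrier Gm. \<forall>u\<in>Vh. \<forall>v\<in>Vh.
        L (\<alpha>, u) (\<beta>, v) = L (\<gamma> \<otimes>\<^bsub>Gm\<^esub> \<alpha>, u) (\<gamma> \<otimes>\<^bsub>Gm\<^esub> \<beta>, v))}"

end

theory Submission
  imports Defs
begin

(* For a Gamma-invariant matrix X and a gain edge (u, v, gamma),
   <X, F_(u,v,gamma)> = |Gamma| * (X_aa + X_bb - 2 X_ab) for any lift {a, b} of that edge, so a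
   feasible X prescribes the same squared bar lengths as P^T P on every bar of the lifted
   framework. Factoring the positive semidefinite X as the Gram matrix of a configuration q in
   R^|V| (Cholesky factorisation by successive Schur complements), universal rigidity of (G, p)
   gives equal squared distances for all pairs of joints; a symmetric matrix with zero row sums
   is determined by these squared distances, hence X = P^T P. *)

definition quad_form :: "'i set \<Rightarrow> ('i \<Rightarrow> 'i \<Rightarrow> real) \<Rightarrow> ('i \<Rightarrow> real) \<Rightarrow> real" where
  "quad_form V X x = (\<Sum>i\<in>V. \<Sum>j\<in>V. x i * X i j * x j)"

lemma quad_form_insert:
  fixes X :: "'i \<Rightarrow> 'i \<Rightarrow> real"
  assumes "finite V" and "a \<notin> V" and sym: "\<forall>i\<in>insert a V. \<forall>j\<in>insert a V. X i j = X j i"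
  shows "quad_form (insert a V) X (x(a := t))
     = t * t * X a a + 2 * t * (\<Sum>j\<in>V. X a j * x j) + quad_form V X x"
proof -
  have row: "(\<Sum>j\<in>V. (x(a := t)) a * X a j * (x(a := t)) j) = t * (\<Sum>j\<in>V. X a j * x j)"
    unfolding sum_distrib_left by (rule sum.cong) (use assms(2) in auto)
  have col: "(\<Sum>i\<in>V. (x(a := t)) i * X i a * (x(a := t)) a) = t * (\<Sum>j\<in>V. X a j * x j)"
    unfolding sum_distrib_left
  proof (rule sum.cong)
    fix i assume "i \<in> V"
    moreover have "X i a = X a i" using sym \<open>i \<in> V\<close> by blast
    ultimately show "(x(a := t)) i * X i a * (x(a := t)) a = t * (X a i * x i)"
      using assms(2) by auto
  qed simp
  have rest: "(\<Sum>i\<in>V. \<Sum>j\<in>V. (x(a := t)) i * X i j * (x(a := t)) j) = quad_form V X x"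
    unfolding quad_form_def by (intro sum.cong) (use assms(2) in auto)
  show ?thesis
    using assms(1,2) row col rest
    by (simp add: quad_form_def sum.distrib del: fun_upd_apply) (simp add: algebra_simps)
qed

lemma psd_diag_nonneg:
  fixes X :: "'i \<Rightarrow> 'i \<Rightarrow> real"
  assumes "finite V" "a \<in> V" and "\<forall>x. 0 \<le> quad_form V X x"
  shows "0 \<le> X a a"
  using assms(3)[rule_format, of "\<lambda>i. if i = a then 1 else 0"] assms(1,2)
  by (simp add: quad_form_def if_distrib[of "\<lambda>z. z * _"] if_distrib[of "\<lambda>z. _ * z"] sum.delta
      cong: if_cong)

lemma psd_row_zero_if_diag_zero:
  fixes X :: "'i \<Rightarrow> 'i \<Rightarrow> real"
  assumes "finite V" "a \<notin> V" "\<forall>i\<in>insert a V. \<forall>j\<in>insert a V. X i j = X j i"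
    and psd: "\<forall>x. 0 \<le> quad_form (insert a V) X x" and "X a a = 0" and "j \<in> V"
  shows "X a j = 0"
proof (rule ccontr)
  assume "X a j \<noteq> 0"
  define e where "e i = (if i = j then 1 else 0 :: real)" for i
  have "(\<Sum>k\<in>V. X a k * e k) = X a j" "quad_form V X e = X j j"
    using assms(1,6)
    by (simp_all add: e_def quad_form_def if_distrib[of "\<lambda>z. z * _"] if_distrib[of "\<lambda>z. _ * z"]
        sum.delta cong: if_cong)
  then have "0 \<le> 2 * t * X a j + X j j" for t
    using psd[rule_format, of "e(a := t)"] quad_form_insert[OF assms(1-3)] \<open>X a a = 0\<close> by simp
  from this[of "- (X j j + 1) / (2 * X a j)"] \<open>X a j \<noteq> 0\<close> show False
    by (simp add: field_simps)
qed

lemma psd_schur_complement: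
  fixes X :: "'i \<Rightarrow> 'i \<Rightarrow> real"
  assumes "finite V" "a \<notin> V" "\<forall>i\<in>insert a V. \<forall>j\<in>insert a V. X i j = X j i"
    and psd: "\<forall>x. 0 \<le> quad_form (insert a V) X x"
  defines "c \<equiv> \<lambda>i. X a i / sqrt (X a a)"
  shows "0 \<le> quad_form V (\<lambda>i j. X i j - c i * c j) x"
proof -
  define S where "S = (\<Sum>j\<in>V. X a j * x j)"
  have Q: "0 \<le> t * t * X a a + 2 * t * S + quad_form V X x" for t
    using psd[rule_format, of "x(a := t)"] unfolding quad_form_insert[OF assms(1-3)] S_def .
  have "0 \<le> X a a"
    by (rule psd_diag_nonneg[of "insert a V"]) (use assms(1) psd in auto)
  have "quad_form V (\<lambda>i j. X i j - c i * c j) x = quad_form V X x - (\<Sum>i\<in>V. c i * x i)\<^sup>2"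
    by (simp add: quad_form_def power2_eq_square sum_product sum_subtractf algebra_simps)
  also have "(\<Sum>i\<in>V. c i * x i)\<^sup>2 = S * S / X a a"
    using \<open>0 \<le> X a a\<close>
    by (simp add: c_def S_def sum_divide_distrib[symmetric] power_divide power2_eq_square)
  also have "0 \<le> quad_form V X x - S * S / X a a"
  proof (cases "X a a = 0")
    case True
    then show ?thesis using Q[of 0] by simp
  next
    case False
    then have "quad_form V X x - S * S / X a a
        = (- S / X a a) * (- S / X a a) * X a a + 2 * (- S / X a a) * S + quad_form V X x"
      by (simp add: field_simps power2_eq_square)
    with Q[of "- S / X a a"] show ?thesis by linarith
  qed
  finally show ?thesis .
qed

lemma psd_gram_factorization:
  fixes X :: "'i \<Rightarrow> 'i \<Rightarrow> real"
  assumes "finite V" "\<forall>i\<in>V. \<forall>j\<in>V. X i j = X j i" "\<forall>x. 0 \<le> quad_form V X x"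
  shows "\<exists>q :: 'i \<Rightarrow> nat \<Rightarrow> real. (\<forall>i k. card V \<le> k \<longrightarrow> q i k = 0) \<and>
           (\<forall>i\<in>V. \<forall>j\<in>V. (\<Sum>k<card V. q i k * q j k) = X i j)"
  using assms
proof (induction V arbitrary: X rule: finite_induct)
  case empty
  show ?case by (intro exI[of _ "\<lambda>_ _. 0"]) simp
next
  case (insert a V)
  note sym = insert.prems(1)
  \<comment> \<open>If X a a = 0, division by zero gives c = 0, which is correct: the row of a vanishes.\<close>
  define c where "c i = X a i / sqrt (X a a)" for i
  have sym': "\<forall>i\<in>V. \<forall>j\<in>V. X i j - c i * c j = X j i - c j * c i"
    using sym by (simp add: mult.commute)
  have psd': "\<forall>x. 0 \<le> quad_form V (\<lambda>i j. X i j - c i * c j) x"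
    using psd_schur_complement[OF insert.hyps insert.prems] by (simp add: c_def)
  obtain q' where q'_0: "\<forall>i k. card V \<le> k \<longrightarrow> q' i k = 0"
    and q': "\<forall>i\<in>V. \<forall>j\<in>V. (\<Sum>k<card V. q' i k * q' j k) = X i j - c i * c j"
    using insert.IH[OF sym' psd'] by blast
  have c_a: "c a * c j = X a j" if "j \<in> insert a V" for j
  proof (cases "X a a = 0")
    case True
    then have "X a j = 0"
      using that psd_row_zero_if_diag_zero[OF insert.hyps insert.prems] by auto
    with True show ?thesis by (simp add: c_def)
  next
    case False
    have "0 \<le> X a a"
      by (rule psd_diag_nonneg[of "insert a V"]) (use insert in auto)
    with False show ?thesis by (simp add: c_def field_simps)
  qed
  define n where "n = card V"
  define q where
    "q i k = (if k < n then (if i = a then 0 else q' i k) else if k = n then c i else 0)" for i k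
  have "(\<Sum>k<Suc n. q i k * q j k) = X i j" if i: "i \<in> insert a V" and j: "j \<in> insert a V" for i j
  proof -
    have split: "(\<Sum>k<Suc n. q i k * q j k) = (\<Sum>k<n. q i k * q j k) + c i * c j"
      by (simp add: q_def)
    consider "i = a" | "j = a" | "i \<in> V" "j \<in> V"
      using i j by blast
    then show ?thesis
    proof cases
      case 1
      then show ?thesis using split c_a[OF j] by (simp add: q_def)
    next
      case 2
      have "X i a = X a i" using sym i by blast
      with 2 show ?thesis using split c_a[OF i] by (simp add: q_def mult.commute)
    next
      case 3
      then have "i \<noteq> a" "j \<noteq> a"
        using insert.hyps(2) by auto
      with 3 have "(\<Sum>k<n. q i k * q j k) = X i j - c i * c j"
        using q' by (simp add: q_def n_def)
      then show ?thesis using split by simp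
    qed
  qed
  moreover have "card (insert a V) = Suc n"
    using insert.hyps by (simp add: n_def)
  ultimately show ?case
    using q'_0 by (intro exI[of _ q]) (auto simp: q_def n_def)
qed

text \<open>Squared distance of joints i and j in any configuration with Gram matrix Y.\<close>

definition sqdist :: "('i \<Rightarrow> 'i \<Rightarrow> real) \<Rightarrow> 'i \<Rightarrow> 'i \<Rightarrow> real" where
  "sqdist Y i j = Y i i + Y j j - 2 * Y i j"

lemma sqdist_gram: "sqdist (gram p) i j = (norm (p i - p j))\<^sup>2"
  by (simp add: sqdist_def gram_def power2_norm_eq_inner inner_diff inner_commute)

lemma edist_squared_eq_sqdist:
  fixes q :: "'i \<Rightarrow> nat \<Rightarrow> real"
  assumes "\<forall>i k. n \<le> k \<longrightarrow> q i k = 0" and "n \<le> d'"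
  shows "(edist d' (q a) (q b))\<^sup>2 = sqdist (\<lambda>i j. \<Sum>k<n. q i k * q j k) a b"
proof -
  have "(\<Sum>k<d'. (q a k - q b k)\<^sup>2) = (\<Sum>k<n. (q a k - q b k)\<^sup>2)"
    using assms by (intro sum.mono_neutral_right) auto
  also have "\<dots> = sqdist (\<lambda>i j. \<Sum>k<n. q i k * q j k) a b"
    by (simp add: sqdist_def power2_eq_square algebra_simps sum.distrib sum_subtractf
        sum_distrib_left)
  moreover have "0 \<le> (\<Sum>k<d'. (q a k - q b k)\<^sup>2)"
    by (simp add: sum_nonneg)
  ultimately show ?thesis
    by (simp add: edist_def)
qed

lemma universally_rigid_sqdist_eq:
  fixes p :: "'i \<Rightarrow> real^'d" and X :: "'i \<Rightarrow> 'i \<Rightarrow> real"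
  assumes rigid: "universally_rigid V adj p" and "finite V"
    and "\<forall>i\<in>V. \<forall>j\<in>V. X i j = X j i" and "\<forall>x. 0 \<le> quad_form V X x"
    and bars: "\<forall>i\<in>V. \<forall>j\<in>V. adj i j \<longrightarrow> sqdist X i j = sqdist (gram p) i j"
    and "i \<in> V" "j \<in> V"
  shows "sqdist X i j = sqdist (gram p) i j"
proof -
  obtain q :: "'i \<Rightarrow> nat \<Rightarrow> real" where q_0: "\<forall>i k. card V \<le> k \<longrightarrow> q i k = 0"
    and q: "\<forall>i\<in>V. \<forall>j\<in>V. (\<Sum>k<card V. q i k * q j k) = X i j"
    using psd_gram_factorization[OF assms(2-4)] by blast
  define d' where "d' = max (card V) CARD('d)"
  have edist_q: "(edist d' (q a) (q b))\<^sup>2 = sqdist X a b" if "a \<in> V" "b \<in> V" for a b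
    using edist_squared_eq_sqdist[OF q_0, of d' a b] q that by (simp add: d'_def sqdist_def)
  have edist_eq_iff: "edist d' (q a) (q b) = norm (p a - p b) \<longleftrightarrow> sqdist X a b = sqdist (gram p) a b"
    if "a \<in> V" "b \<in> V" for a b
  proof -
    have "0 \<le> edist d' (q a) (q b)"
      by (simp add: edist_def sum_nonneg)
    then show ?thesis
      using edist_q[OF that] sqdist_gram[of p a b] power2_eq_imp_eq[of "edist d' (q a) (q b)"]
      by (metis norm_ge_zero)
  qed
  have "\<forall>a k. d' \<le> k \<longrightarrow> q a k = 0"
    using q_0 by (simp add: d'_def)
  moreover have "\<forall>a\<in>V. \<forall>b\<in>V. adj a b \<longrightarrow> edist d' (q a) (q b) = norm (p a - p b)"
    using bars edist_eq_iff by blast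
  ultimately have "\<forall>a\<in>V. \<forall>b\<in>V. edist d' (q a) (q b) = norm (p a - p b)"
    using rigid unfolding universally_rigid_def d'_def by auto
  then have "edist d' (q i) (q j) = norm (p i - p j)"
    using \<open>i \<in> V\<close> \<open>j \<in> V\<close> by blast
  then show ?thesis
    using edist_eq_iff[OF \<open>i \<in> V\<close> \<open>j \<in> V\<close>] by blast
qed

lemma centred_matrix_zero_if_sqdist_zero:
  fixes M :: "'i \<Rightarrow> 'i \<Rightarrow> real"
  assumes "finite V" and rows: "\<forall>i\<in>V. (\<Sum>j\<in>V. M i j) = 0"
    and dist: "\<forall>i\<in>V. \<forall>j\<in>V. sqdist M i j = 0" and "i \<in> V" "j \<in> V"
  shows "M i j = 0"
proof -
  define T where "T = (\<Sum>k\<in>V. M k k)"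
  define n where "n = real (card V)"
  have "n > 0"
    using assms(1,4) by (auto simp: n_def card_gt_0_iff)
  have diag: "n * M k k + T = 0" if "k \<in> V" for k
  proof -
    have "0 = (\<Sum>l\<in>V. M k k + M l l - 2 * M k l)"
      using dist that by (simp add: sqdist_def)
    also have "\<dots> = n * M k k + T - 2 * (\<Sum>l\<in>V. M k l)"
      by (simp add: T_def n_def sum.distrib sum_subtractf sum_distrib_left)
    finally show ?thesis
      using rows that by simp
  qed
  have "0 = (\<Sum>k\<in>V. n * M k k + T)"
    using diag by simp
  also have "\<dots> = n * T + n * T"
    by (simp add: T_def n_def sum.distrib sum_distrib_left)
  finally have "T = 0"
    using \<open>n > 0\<close> by simp
  with diag \<open>n > 0\<close> \<open>i \<in> V\<close> \<open>j \<in> V\<close> have "M i i = 0" "M j j = 0"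
    by auto
  moreover have "sqdist M i j = 0"
    using dist \<open>i \<in> V\<close> \<open>j \<in> V\<close> by blast
  ultimately show ?thesis
    by (simp add: sqdist_def)
qed

lemma centred_matrix_eq_if_sqdist_eq:
  fixes X Y :: "'i \<Rightarrow> 'i \<Rightarrow> real"
  assumes "finite V"
    and "\<forall>i\<in>V. (\<Sum>j\<in>V. X i j) = 0" and "\<forall>i\<in>V. (\<Sum>j\<in>V. Y i j) = 0"
    and "\<forall>i\<in>V. \<forall>j\<in>V. sqdist X i j = sqdist Y i j" and "i \<in> V" "j \<in> V"
  shows "X i j = Y i j"
proof -
  have "X i j - Y i j = 0"
  proof (rule centred_matrix_zero_if_sqdist_zero[OF assms(1) _ _ assms(5,6)])
    show "\<forall>i\<in>V. (\<Sum>j\<in>V. X i j - Y i j) = 0"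
      using assms(2,3) by (simp add: sum_subtractf)
    show "\<forall>a\<in>V. \<forall>b\<in>V. sqdist (\<lambda>i j. X i j - Y i j) a b = 0"
    proof (intro ballI)
      fix a b assume "a \<in> V" "b \<in> V"
      with assms(4) have "sqdist X a b = sqdist Y a b" by blast
      then show "sqdist (\<lambda>i j. X i j - Y i j) a b = 0" by (simp add: sqdist_def)
    qed
  qed
  then show ?thesis by simp
qed

lemma orthogonal_matrix_inner:
  fixes A :: "real^'n^'n"
  assumes "orthogonal_matrix A"
  shows "(A *v x) \<bullet> (A *v y) = x \<bullet> y"
  using assms orthogonal_transformation_matrix[of "(*v) A"]
  by (simp add: matrix_vector_mul_linear orthogonal_transformation_def)

lemma inv_psd_laplaciansD:
  assumes "Y \<in> inv_psd_laplacians Gm Vh"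
  shows "\<forall>i\<in>carrier Gm \<times> Vh. \<forall>j\<in>carrier Gm \<times> Vh. Y i j = Y j i"
    and "\<forall>x. 0 \<le> quad_form (carrier Gm \<times> Vh) Y x"
    and "\<forall>i\<in>carrier Gm \<times> Vh. (\<Sum>j\<in>carrier Gm \<times> Vh. Y i j) = 0"
    and "\<lbrakk>\<alpha> \<in> carrier Gm; \<beta> \<in> carrier Gm; \<gamma> \<in> carrier Gm; u \<in> Vh; v \<in> Vh\<rbrakk>
      \<Longrightarrow> Y (\<alpha>, u) (\<beta>, v) = Y (\<gamma> \<otimes>\<^bsub>Gm\<^esub> \<alpha>, u) (\<gamma> \<otimes>\<^bsub>Gm\<^esub> \<beta>, v)"
  using assms unfolding inv_psd_laplacians_def quad_form_def by blast+

lemma gram_in_inv_psd_laplacians: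
  fixes p :: "'g \<times> 'v \<Rightarrow> real^'d"
  assumes "point_group Gm \<theta>" and "p \<in> C_theta Gm Vh \<theta>"
  shows "gram p \<in> inv_psd_laplacians Gm Vh"
  unfolding inv_psd_laplacians_def
proof (intro CollectI conjI allI ballI)
  fix i j show "gram p i j = gram p j i"
    by (simp add: gram_def inner_commute)
next
  let ?V = "carrier Gm \<times> Vh"
  fix x :: "'g \<times> 'v \<Rightarrow> real"
  have "(\<Sum>i\<in>?V. \<Sum>j\<in>?V. x i * gram p i j * x j) = (\<Sum>i\<in>?V. x i *\<^sub>R p i) \<bullet> (\<Sum>j\<in>?V. x j *\<^sub>R p j)"
    unfolding gram_def inner_sum_left
    by (rule sum.cong[OF refl]) (simp add: inner_sum_right sum_distrib_left algebra_simps)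
  then show "0 \<le> (\<Sum>i\<in>?V. \<Sum>j\<in>?V. x i * gram p i j * x j)"
    by simp
next
  fix i
  have "(\<Sum>j\<in>carrier Gm \<times> Vh. p j) = 0"
    using assms(2) by (simp add: C_theta_def)
  then show "(\<Sum>j\<in>carrier Gm \<times> Vh. gram p i j) = 0"
    by (simp add: gram_def inner_sum_right[symmetric])
next
  fix \<alpha> \<beta> \<gamma> u v
  assume "\<alpha> \<in> carrier Gm" "\<beta> \<in> carrier Gm" "\<gamma> \<in> carrier Gm" "u \<in> Vh" "v \<in> Vh"
  moreover have "orthogonal_matrix (\<theta> \<gamma>)"
    using assms(1) \<open>\<gamma> \<in> carrier Gm\<close> by (simp add: point_group_def)
  moreover have "p (\<gamma> \<otimes>\<^bsub>Gm\<^esub> \<delta>, w) = \<theta> \<gamma> *v p (\<delta>, w)" if "\<delta> \<in> carrier Gm" "w \<in> Vh" for \<delta> w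
    using assms(2) \<open>\<gamma> \<in> carrier Gm\<close> that by (simp add: C_theta_def compatible_def)
  ultimately show "gram p (\<alpha>, u) (\<beta>, v) = gram p (\<gamma> \<otimes>\<^bsub>Gm\<^esub> \<alpha>, u) (\<gamma> \<otimes>\<^bsub>Gm\<^esub> \<beta>, v)"
    by (simp add: gram_def orthogonal_matrix_inner)
qed

lemma sqdist_left_translate:
  assumes "group Gm" and Y: "Y \<in> inv_psd_laplacians Gm Vh"
    and "\<alpha> \<in> carrier Gm" "\<gamma> \<in> carrier Gm" "u \<in> Vh" "v \<in> Vh"
  shows "sqdist Y (\<alpha>, u) (\<alpha> \<otimes>\<^bsub>Gm\<^esub> \<gamma>, v) = sqdist Y (\<one>\<^bsub>Gm\<^esub>, u) (\<gamma>, v)"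
proof -
  interpret group Gm by fact
  let ?\<iota> = "inv\<^bsub>Gm\<^esub> \<alpha>"
  have \<alpha>: "?\<iota> \<otimes>\<^bsub>Gm\<^esub> \<alpha> = \<one>\<^bsub>Gm\<^esub>" and \<alpha>\<gamma>: "?\<iota> \<otimes>\<^bsub>Gm\<^esub> (\<alpha> \<otimes>\<^bsub>Gm\<^esub> \<gamma>) = \<gamma>"
    using assms(3,4) by (simp_all add: m_assoc[symmetric])
  have "Y (\<alpha>, u) (\<alpha>, u) = Y (\<one>\<^bsub>Gm\<^esub>, u) (\<one>\<^bsub>Gm\<^esub>, u)"
    using inv_psd_laplaciansD(4)[OF Y, of \<alpha> \<alpha> ?\<iota> u u] assms(3-6) \<alpha> by simp
  moreover have "Y (\<alpha> \<otimes>\<^bsub>Gm\<^esub> \<gamma>, v) (\<alpha> \<otimes>\<^bsub>Gm\<^esub> \<gamma>, v) = Y (\<gamma>, v) (\<gamma>, v)"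
    using inv_psd_laplaciansD(4)[OF Y, of "\<alpha> \<otimes>\<^bsub>Gm\<^esub> \<gamma>" "\<alpha> \<otimes>\<^bsub>Gm\<^esub> \<gamma>" ?\<iota> v v] assms(3-6) \<alpha>\<gamma>
    by simp
  moreover have "Y (\<alpha>, u) (\<alpha> \<otimes>\<^bsub>Gm\<^esub> \<gamma>, v) = Y (\<one>\<^bsub>Gm\<^esub>, u) (\<gamma>, v)"
    using inv_psd_laplaciansD(4)[OF Y, of \<alpha> "\<alpha> \<otimes>\<^bsub>Gm\<^esub> \<gamma>" ?\<iota> u v] assms(3-6) \<alpha> \<alpha>\<gamma> by simp
  ultimately show ?thesis
    by (simp add: sqdist_def)
qed

lemma frob_Fmat:
  fixes X :: "'i \<Rightarrow> 'i \<Rightarrow> real"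
  assumes "finite V" "a \<in> V" "b \<in> V" "X a b = X b a"
  shows "frob V X (Fmat a b) = sqdist X a b"
proof -
  define e where "e k = (if k = a then 1 else 0) - (if k = b then 1 else 0 :: real)" for k
  have apply_e: "(\<Sum>k\<in>V. f k * e k) = f a - f b" for f :: "'i \<Rightarrow> real"
    using assms(1-3)
    by (simp add: e_def right_diff_distrib sum_subtractf if_distrib[of "\<lambda>z. _ * z"] sum.delta'
        cong: if_cong)
  have "frob V X (Fmat a b) = (\<Sum>i\<in>V. (\<Sum>j\<in>V. X i j * e j) * e i)"
    unfolding frob_def Fmat_def e_def[symmetric] sum_distrib_right
    by (simp add: mult.assoc)
  also have "\<dots> = (X a a - X a b) - (X b a - X b b)"
    by (simp add: apply_e)
  finally show ?thesis
    using assms(4) by (simp add: sqdist_def)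
qed

lemma frob_sum_right: "frob V X (\<lambda>i j. \<Sum>\<alpha>\<in>A. f \<alpha> i j) = (\<Sum>\<alpha>\<in>A. frob V X (f \<alpha>))"
  unfolding frob_def sum_distrib_left
  by (subst sum.swap) (simp add: sum.swap[of _ A])

lemma frob_Fgain:
  assumes "group Gm" and "finite (carrier Gm)" "finite Vh" and Y: "Y \<in> inv_psd_laplacians Gm Vh"
    and "\<gamma> \<in> carrier Gm" "u \<in> Vh" "v \<in> Vh"
  shows "frob (carrier Gm \<times> Vh) Y (Fgain Gm u v \<gamma>)
    = real (card (carrier Gm)) * sqdist Y (\<one>\<^bsub>Gm\<^esub>, u) (\<gamma>, v)"
proof -
  interpret group Gm by fact
  have "frob (carrier Gm \<times> Vh) Y (Fmat (\<alpha>, u) (\<alpha> \<otimes>\<^bsub>Gm\<^esub> \<gamma>, v))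
      = sqdist Y (\<one>\<^bsub>Gm\<^esub>, u) (\<gamma>, v)" if "\<alpha> \<in> carrier Gm" for \<alpha>
  proof -
    have "(\<alpha>, u) \<in> carrier Gm \<times> Vh" "(\<alpha> \<otimes>\<^bsub>Gm\<^esub> \<gamma>, v) \<in> carrier Gm \<times> Vh"
      using that assms(5-7) by auto
    then have "frob (carrier Gm \<times> Vh) Y (Fmat (\<alpha>, u) (\<alpha> \<otimes>\<^bsub>Gm\<^esub> \<gamma>, v))
        = sqdist Y (\<alpha>, u) (\<alpha> \<otimes>\<^bsub>Gm\<^esub> \<gamma>, v)"
      using inv_psd_laplaciansD(1)[OF Y] assms(2,3) by (intro frob_Fmat) auto
    also have "\<dots> = sqdist Y (\<one>\<^bsub>Gm\<^esub>, u) (\<gamma>, v)"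
      using sqdist_left_translate[OF assms(1) Y that assms(5-7)] .
    finally show ?thesis .
  qed
  then show ?thesis
    by (simp add: Fgain_def frob_sum_right)
qed

lemma sqdist_eq_on_lift_adj:
  assumes "group Gm" "finite (carrier Gm)" "finite Vh" "Eh \<subseteq> Vh \<times> Vh \<times> carrier Gm"
    and X: "X \<in> inv_psd_laplacians Gm Vh" and Y: "Y \<in> inv_psd_laplacians Gm Vh"
    and frob_eq: "\<forall>(u, v, \<gamma>)\<in>Eh. frob (carrier Gm \<times> Vh) X (Fgain Gm u v \<gamma>)
                                  = frob (carrier Gm \<times> Vh) Y (Fgain Gm u v \<gamma>)"
    and a: "a \<in> carrier Gm \<times> Vh" and b: "b \<in> carrier Gm \<times> Vh" and "lift_adj Gm Eh a b"
  shows "sqdist X a b = sqdist Y a b"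
proof -
  interpret group Gm by fact
  have edge: "sqdist X (\<alpha>, u) (\<beta>, v) = sqdist Y (\<alpha>, u) (\<beta>, v)"
    if "\<alpha> \<in> carrier Gm" "\<beta> \<in> carrier Gm" and e: "(u, v, inv\<^bsub>Gm\<^esub> \<alpha> \<otimes>\<^bsub>Gm\<^esub> \<beta>) \<in> Eh"
    for \<alpha> \<beta> u v
  proof -
    let ?\<gamma> = "inv\<^bsub>Gm\<^esub> \<alpha> \<otimes>\<^bsub>Gm\<^esub> \<beta>"
    have \<gamma>: "?\<gamma> \<in> carrier Gm" "\<alpha> \<otimes>\<^bsub>Gm\<^esub> ?\<gamma> = \<beta>" and uv: "u \<in> Vh" "v \<in> Vh"
      using that assms(4) by (auto simp: m_assoc[symmetric])
    have "card (carrier Gm) \<noteq> 0"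
      using assms(2) by (auto simp: card_eq_0_iff)
    moreover have "frob (carrier Gm \<times> Vh) X (Fgain Gm u v ?\<gamma>) = frob (carrier Gm \<times> Vh) Y (Fgain Gm u v ?\<gamma>)"
      using frob_eq e by blast
    ultimately have "sqdist X (\<one>\<^bsub>Gm\<^esub>, u) (?\<gamma>, v) = sqdist Y (\<one>\<^bsub>Gm\<^esub>, u) (?\<gamma>, v)"
      by (simp add: frob_Fgain[OF assms(1-3) X \<gamma>(1) uv] frob_Fgain[OF assms(1-3) Y \<gamma>(1) uv])
    then show ?thesis
      using sqdist_left_translate[OF assms(1) X that(1) \<gamma>(1) uv]
        sqdist_left_translate[OF assms(1) Y that(1) \<gamma>(1) uv] \<gamma>(2)
      by simp
  qed
  have sqdist_commute: "sqdist Z a b = sqdist Z b a" if "Z \<in> inv_psd_laplacians Gm Vh" for Z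
  proof -
    have "Z a b = Z b a"
      using inv_psd_laplaciansD(1)[OF that] a b by blast
    then show ?thesis
      by (simp add: sqdist_def)
  qed
  obtain \<alpha> u \<beta> v where ab: "a = (\<alpha>, u)" "b = (\<beta>, v)" and "\<alpha> \<in> carrier Gm" "\<beta> \<in> carrier Gm"
    using a b by auto
  with \<open>lift_adj Gm Eh a b\<close> edge sqdist_commute[OF X] sqdist_commute[OF Y] show ?thesis
    unfolding lift_adj_def by auto
qed

theorem proposition4p3:
  fixes Gm :: "('g, 'b) monoid_scheme"
    and \<theta> :: "'g \<Rightarrow> real^'d^'d"
    and Vh :: "'v set"
    and Eh :: "('v \<times> 'v \<times> 'g) set"
    and p :: "'g \<times> 'v \<Rightarrow> real^'d"
  assumes "group Gm" and "finite (carrier Gm)"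
    and "point_group Gm \<theta>"
    and "finite Vh"
    and "Eh \<subseteq> Vh \<times> Vh \<times> carrier Gm"
    and "\<forall>(u, v, \<gamma>)\<in>Eh. \<not> (u = v \<and> \<gamma> = \<one>\<^bsub>Gm\<^esub>)"
    and "p \<in> C_theta Gm Vh \<theta>"
    and "universally_rigid (carrier Gm \<times> Vh) (lift_adj Gm Eh) p"
  shows "gram p \<in> inv_psd_laplacians Gm Vh \<and>
         (\<forall>X \<in> inv_psd_laplacians Gm Vh.
            (\<forall>(u, v, \<gamma>)\<in>Eh. frob (carrier Gm \<times> Vh) X (Fgain Gm u v \<gamma>)
                               = frob (carrier Gm \<times> Vh) (gram p) (Fgain Gm u v \<gamma>)) \<longrightarrow>
            (\<forall>i\<in>carrier Gm \<times> Vh. \<forall>j\<in>carrier Gm \<times> Vh. X i j = gram p i j))"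
proof -
  let ?V = "carrier Gm \<times> Vh"
  have fin: "finite ?V"
    using assms(2,4) by simp
  have gram: "gram p \<in> inv_psd_laplacians Gm Vh"
    using gram_in_inv_psd_laplacians[OF assms(3,7)] .
  moreover have "X i j = gram p i j"
    if X: "X \<in> inv_psd_laplacians Gm Vh"
      and frob_eq: "\<forall>(u, v, \<gamma>)\<in>Eh. frob ?V X (Fgain Gm u v \<gamma>) = frob ?V (gram p) (Fgain Gm u v \<gamma>)"
      and "i \<in> ?V" "j \<in> ?V" for X i j
  proof -
    have "\<forall>a\<in>?V. \<forall>b\<in>?V. lift_adj Gm Eh a b \<longrightarrow> sqdist X a b = sqdist (gram p) a b"
      using sqdist_eq_on_lift_adj[OF assms(1,2,4,5) X gram frob_eq] by blast
    then have "\<forall>a\<in>?V. \<forall>b\<in>?V. sqdist X a b = sqdist (gram p) a b"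
      using universally_rigid_sqdist_eq[OF assms(8) fin inv_psd_laplaciansD(1,2)[OF X]] by blast
    then show ?thesis
      using centred_matrix_eq_if_sqdist_eq[OF fin inv_psd_laplaciansD(3)[OF X]
          inv_psd_laplaciansD(3)[OF gram] _ \<open>i \<in> ?V\<close> \<open>j \<in> ?V\<close>] by blast
  qed
  ultimately show ?thesis
    by blast
qed

end
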